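(* Let $\Lambda\Subset\mathbb X$. For a selector $s$, let $\rho_0=\mathbf 1_{\{\varnothing\}}:\mathbf F\to\mathbb C$ and $\rho_{n+1}=K_\Lambda\rho_n$ for $n\in\mathbb N_0$. Then the sequence $(\rho_n)_{n\in\mathbb N_0}$ does not depend on the choice of the selector $s$, and $\rho_n(\varnothing)=1$ for every $n\in\mathbb N_0$.
   Context: $\mathbb X$ is a finite or countably infinite set, $X\Subset\mathbb X$ means finite subset, $\mathbf F$ is the set of finite subsets. Fix $z:\mathbb X\to\mathbb C$, $W:\mathbf F\to\mathbb C$. Conditional interaction: $W(X\mid B)=\prod_{C\subset B}W(X\cup C)$ if $X\cap B=\varnothing$, $W(X\mid B)=0$ if $X=\{y\}$ with $y\in B$, $W(X\mid B)=1$ otherwise. Boltzmann factor $\kappa(X\mid B)=\prod_{\varnothing\neq S\subset X}W(S\mid B)$, $\kappa(s\mid B)=\kappa(\{s\}\mid B)$. Kernel: $\gamma(s,N\mid B)=\sum_{M\subset N}(-1)^{|N\setminus M|}\kappa(s\mid B\cup M)$. A selector is a map $s:\mathbf F\setminus\{\varnothing\}\to\mathbb X$ with $s_X:=s(X)\in X$; put $X'_s=X\setminus\{s_X\}$. For $\rho:\mathbf F\to\mathbb C$, the Kirkwood--Salsburg operator is $(K_\Lambda\rho)(\varnothing)=\rho(\varnothing)$ and, for $X\neq\varnothing$, $(K_\Lambda\rho)(X)=\sum_{N\subset\Lambda\setminus X'_s}z(s_X)\gamma(s_X,N\mid X'_s)\rho(X'_s\cup N)$. *)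

theory Defs
  imports Complex_Main "HOL-Library.Countable"
begin

text \<open>The ground set X is the type 'x (finite or countable); finite subsets are sets with
  finite. Only values of functions on finite sets are meaningful.\<close>

definition Wc :: "('x set \<Rightarrow> complex) \<Rightarrow> 'x set \<Rightarrow> 'x set \<Rightarrow> complex" where
  "Wc W X B = (if X \<inter> B = {} then (\<Prod>C\<in>Pow B. W (X \<union> C))
               else if (\<exists>y. X = {y} \<and> y \<in> B) then 0 else 1)"

definition kappa :: "('x set \<Rightarrow> complex) \<Rightarrow> 'x set \<Rightarrow> 'x set \<Rightarrow> complex" where
  "kappa W X B = (\<Prod>S\<in>Pow X - {{}}. Wc W S B)"

definition gam :: "('x set \<Rightarrow> complex) \<Rightarrow> 'x \<Rightarrow> 'x set \<Rightarrow> 'x set \<Rightarrow> complex" where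
  "gam W s N B = (\<Sum>M\<in>Pow N. (-1) ^ card (N - M) * kappa W {s} (B \<union> M))"

definition selector :: "('x set \<Rightarrow> 'x) \<Rightarrow> bool" where
  "selector s \<longleftrightarrow> (\<forall>X. finite X \<and> X \<noteq> {} \<longrightarrow> s X \<in> X)"

definition KS :: "('x \<Rightarrow> complex) \<Rightarrow> ('x set \<Rightarrow> complex) \<Rightarrow> ('x set \<Rightarrow> 'x)
                  \<Rightarrow> 'x set \<Rightarrow> ('x set \<Rightarrow> complex) \<Rightarrow> ('x set \<Rightarrow> complex)" where
  "KS z W s \<Lambda> \<rho> X = (if X = {} then \<rho> {} else
     (let x = s X; X' = X - {x} in
      \<Sum>N\<in>Pow (\<Lambda> - X'). z x * gam W x N X' * \<rho> (X' \<union> N)))"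

definition rho_seq :: "('x \<Rightarrow> complex) \<Rightarrow> ('x set \<Rightarrow> complex) \<Rightarrow> ('x set \<Rightarrow> 'x)
                  \<Rightarrow> 'x set \<Rightarrow> nat \<Rightarrow> ('x set \<Rightarrow> complex)" where
  "rho_seq z W s \<Lambda> n = (KS z W s \<Lambda> ^^ n) (\<lambda>X. if X = {} then 1 else 0)"

end

theory Submission
  imports Defs
begin

text \<open>
  Every iterate has the form
  \<rho>_n(X) = \<Sum>{z^(X \<union> N) \<kappa>(X \<union> N | {}) a_n(|X \<union> N|) | N \<subseteq> \<Lambda> - X}
  with coefficients a_n that depend on n and on the cardinality only. For X \<noteq> {}, x = s(X) and
  X' = X - {x},
  expanding the kernel \<gamma> and applying Moebius inversion on the subset lattice turns
  (K \<rho>)(X) into the sum over M \<subseteq> \<Lambda> - X' of z_x \<kappa>(x | X' \<union> M) z^(X' \<union> M) \<kappa>(X' \<union> M | {}) a(|X' \<union> M|).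
  The terms with x \<in> M vanish since \<kappa>(x | B) = 0 for x \<in> B, and the Boltzmann factor factorizes,
  z_x \<kappa>(x | B) z^B \<kappa>(B | {}) = z^(B \<union> {x}) \<kappa>(B \<union> {x} | {}). So K preserves the form, merely
  shifting the coefficients, and which point x was removed from X leaves no trace.
\<close>

lemma sum_Pow_moebius:
  fixes k :: "'a set \<Rightarrow> 'b::comm_ring_1"
  assumes "finite Q"
  shows "(\<Sum>N\<in>Pow Q. \<Sum>M\<in>Pow N. (-1) ^ card (N - M) * k M) = k Q"
proof -
  \<comment> \<open>Up to the sign (-1)^|N|, the inner sum is the transform g, which is an involution.\<close>
  define g where "g N = (\<Sum>M\<in>Pow N. (-1) ^ card M * k M)" for N
  have "k Q = (\<Sum>N\<in>Pow Q. (-1) ^ card N * g N)"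
    by (rule inclusion_exclusion_symmetric) (simp_all add: g_def assms)
  also have "\<dots> = (\<Sum>N\<in>Pow Q. \<Sum>M\<in>Pow N. (-1) ^ card (N - M) * k M)"
  proof (intro sum.cong refl)
    fix N assume "N \<in> Pow Q"
    then have N: "finite N" using assms finite_subset by auto
    have "(-1) ^ card N * (-1) ^ card M = ((-1) ^ card (N - M) :: 'b)" if "M \<subseteq> N" for M
      using that N by (simp add: card_Diff_subset card_mono finite_subset
          neg_one_power_add_eq_neg_one_power_diff flip: power_add)
    then show "(-1) ^ card N * g N = (\<Sum>M\<in>Pow N. (-1) ^ card (N - M) * k M)"
      by (simp add: g_def sum_distrib_left mult.assoc flip: mult.assoc[of "(-1) ^ card N"])
  qed
  finally show ?thesis ..
qed

lemma sum_Pow_diff_union: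
  assumes "N \<subseteq> L"
  shows "(\<Sum>P\<in>Pow (L - N). F (N \<union> P)) = (\<Sum>Q | Q \<subseteq> L \<and> N \<subseteq> Q. F Q)"
  by (rule sum.reindex_bij_witness[where i = "\<lambda>Q. Q - N" and j = "\<lambda>P. N \<union> P"])
    (use assms in auto)

lemma sum_Pow_superset_swap:
  fixes g F :: "'a set \<Rightarrow> 'b::comm_semiring_0"
  assumes "finite L"
  shows "(\<Sum>N\<in>Pow L. g N * (\<Sum>P\<in>Pow (L - N). F (N \<union> P))) = (\<Sum>Q\<in>Pow L. (\<Sum>N\<in>Pow Q. g N) * F Q)"
proof -
  have "(\<Sum>N\<in>Pow L. g N * (\<Sum>P\<in>Pow (L - N). F (N \<union> P)))
      = (\<Sum>N\<in>Pow L. \<Sum>Q | Q \<in> Pow L \<and> N \<subseteq> Q. g N * F Q)"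
    by (intro sum.cong refl) (simp add: assms sum_Pow_diff_union sum_distrib_left)
  also have "\<dots> = (\<Sum>Q\<in>Pow L. \<Sum>N | N \<in> Pow L \<and> N \<subseteq> Q. g N * F Q)"
    by (rule sum.swap_restrict) (simp_all add: assms)
  also have "\<dots> = (\<Sum>Q\<in>Pow L. (\<Sum>N\<in>Pow Q. g N) * F Q)"
  proof (intro sum.cong refl)
    fix Q assume "Q \<in> Pow L"
    then have "{N. N \<in> Pow L \<and> N \<subseteq> Q} = Pow Q" by auto
    then show "(\<Sum>N | N \<in> Pow L \<and> N \<subseteq> Q. g N * F Q) = (\<Sum>N\<in>Pow Q. g N) * F Q"
      by (simp add: sum_distrib_right)
  qed
  finally show ?thesis .
qed

lemma sum_Pow_moebius_supersets:
  fixes k F :: "'a set \<Rightarrow> 'b::comm_ring_1"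
  assumes "finite L"
  shows "(\<Sum>N\<in>Pow L. (\<Sum>M\<in>Pow N. (-1) ^ card (N - M) * k M) * (\<Sum>P\<in>Pow (L - N). F (N \<union> P)))
       = (\<Sum>Q\<in>Pow L. k Q * F Q)"
proof -
  have "(\<Sum>N\<in>Pow L. (\<Sum>M\<in>Pow N. (-1) ^ card (N - M) * k M) * (\<Sum>P\<in>Pow (L - N). F (N \<union> P)))
      = (\<Sum>Q\<in>Pow L. (\<Sum>N\<in>Pow Q. \<Sum>M\<in>Pow N. (-1) ^ card (N - M) * k M) * F Q)"
    using assms by (rule sum_Pow_superset_swap)
  also have "\<dots> = (\<Sum>Q\<in>Pow L. k Q * F Q)"
    using assms by (intro sum.cong refl) (simp add: sum_Pow_moebius finite_subset)
  finally show ?thesis .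
qed

lemma kappa_singleton_eq_Wc: "kappa W {x} B = Wc W {x} B"
proof -
  have "Pow {x} - {{}} = {{x}}" by auto
  then show ?thesis by (simp add: kappa_def)
qed

lemma kappa_singleton_eq_zero: "x \<in> B \<Longrightarrow> kappa W {x} B = 0"
  by (simp add: kappa_singleton_eq_Wc Wc_def)

lemma kappa_singleton: "x \<notin> B \<Longrightarrow> kappa W {x} B = (\<Prod>C\<in>Pow B. W (insert x C))"
  by (simp add: kappa_singleton_eq_Wc Wc_def)

lemma kappa_empty: "kappa W Y {} = (\<Prod>S\<in>Pow Y - {{}}. W S)"
  by (simp add: kappa_def Wc_def)

lemma kappa_insert_empty:
  assumes "finite B" "x \<notin> B"
  shows "kappa W (insert x B) {} = kappa W {x} B * kappa W B {}"
proof -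
  have "Pow (insert x B) - {{}} = insert x ` Pow B \<union> (Pow B - {{}})"
    by (auto simp: Pow_insert)
  moreover have "inj_on (insert x) (Pow B)"
    using assms(2) by (auto intro!: inj_onI)
  moreover have "insert x ` Pow B \<inter> (Pow B - {{}}) = {}"
    using assms(2) by auto
  ultimately show ?thesis
    using assms by (simp add: kappa_empty kappa_singleton prod.union_disjoint prod.reindex)
qed

definition weight :: "('x \<Rightarrow> complex) \<Rightarrow> ('x set \<Rightarrow> complex) \<Rightarrow> 'x set \<Rightarrow> complex" where
  "weight z W Y = (\<Prod>y\<in>Y. z y) * kappa W Y {}"

lemma weight_empty [simp]: "weight z W {} = 1"
  by (simp add: weight_def kappa_empty)

lemma weight_insert:
  "finite B \<Longrightarrow> x \<notin> B \<Longrightarrow> weight z W (insert x B) = z x * kappa W {x} B * weight z W B"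
  by (simp add: weight_def kappa_insert_empty)

definition weight_expansion ::
    "('x \<Rightarrow> complex) \<Rightarrow> ('x set \<Rightarrow> complex) \<Rightarrow> 'x set \<Rightarrow> (nat \<Rightarrow> complex) \<Rightarrow> 'x set \<Rightarrow> complex" where
  "weight_expansion z W L a X = (\<Sum>N\<in>Pow (L - X). weight z W (X \<union> N) * a (card (X \<union> N)))"

lemma weight_expansion_indicator:
  assumes "finite L" "finite X"
  shows "weight_expansion z W L (\<lambda>k. if k = 0 then 1 else 0) X = (if X = {} then 1 else 0)"
proof -
  have "card (X \<union> N) = 0 \<longleftrightarrow> X = {} \<and> N = {}" if "N \<in> Pow (L - X)" for N
    using that assms by (auto simp: card_eq_0_iff dest: finite_subset)
  then have "weight_expansion z W L (\<lambda>k. if k = 0 then 1 else 0) X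
      = (\<Sum>N\<in>Pow (L - X). if X = {} \<and> N = {} then weight z W (X \<union> N) else 0)"
    unfolding weight_expansion_def by (intro sum.cong refl) simp
  then show ?thesis
    using assms by simp
qed

lemma KS_weight_expansion:
  assumes L: "finite L" and s: "selector s" and X: "finite X" "X \<noteq> {}"
    and \<rho>: "\<And>Y. finite Y \<Longrightarrow> \<rho> Y = weight_expansion z W L a Y"
  shows "KS z W s L \<rho> X = weight_expansion z W L (\<lambda>k. a (k - 1)) X"
proof -
  define x X' where "x = s X" and "X' = X - {x}"
  have "x \<in> X"
    using s X by (simp add: selector_def x_def)
  then have X_eq: "X = insert x X'" and "x \<notin> X'" and "finite X'"
    using X by (auto simp: X'_def)
  define k where "k M = kappa W {x} (X' \<union> M)" for M
  define F where "F Q = weight z W (X' \<union> Q) * a (card (X' \<union> Q))" for Q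
  have \<rho>_eq: "\<rho> (X' \<union> N) = (\<Sum>P\<in>Pow (L - X' - N). F (N \<union> P))" if "N \<in> Pow (L - X')" for N
  proof -
    have "finite (X' \<union> N)"
      using that L \<open>finite X'\<close> by (auto intro: finite_subset)
    moreover have "L - (X' \<union> N) = L - X' - N" by blast
    ultimately show ?thesis
      using \<rho>[of "X' \<union> N"] by (simp add: weight_expansion_def F_def Un_assoc)
  qed
  have "KS z W s L \<rho> X = (\<Sum>N\<in>Pow (L - X'). z x * gam W x N X' * \<rho> (X' \<union> N))"
    using X by (simp add: KS_def Let_def flip: x_def X'_def)
  also have "\<dots> = z x * (\<Sum>N\<in>Pow (L - X').
      (\<Sum>M\<in>Pow N. (-1) ^ card (N - M) * k M) * (\<Sum>P\<in>Pow (L - X' - N). F (N \<union> P)))"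
    by (subst sum_distrib_left) (intro sum.cong refl, simp add: gam_def k_def \<rho>_eq mult.assoc)
  also have "\<dots> = z x * (\<Sum>Q\<in>Pow (L - X'). k Q * F Q)"
    using L by (simp add: sum_Pow_moebius_supersets)
  also have "\<dots> = (\<Sum>Q\<in>Pow (L - X'). z x * k Q * F Q)"
    by (simp add: sum_distrib_left mult.assoc)
  also have "\<dots> = (\<Sum>Q\<in>Pow (L - X). z x * k Q * F Q)"
  proof (rule sum.mono_neutral_right)
    show "\<forall>Q\<in>Pow (L - X') - Pow (L - X). z x * k Q * F Q = 0"
      using X_eq by (auto simp: k_def kappa_singleton_eq_zero)
  qed (use L X_eq in auto)
  also have "\<dots> = weight_expansion z W L (\<lambda>k. a (k - 1)) X"
  proof (unfold weight_expansion_def, intro sum.cong refl)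
    fix Q assume "Q \<in> Pow (L - X)"
    then have "finite (X' \<union> Q)" "x \<notin> X' \<union> Q" "X \<union> Q = insert x (X' \<union> Q)"
      using L \<open>finite X'\<close> \<open>x \<notin> X'\<close> X_eq finite_subset by auto
    then show "z x * k Q * F Q = weight z W (X \<union> Q) * a (card (X \<union> Q) - 1)"
      by (simp add: k_def F_def weight_insert)
  qed
  finally show ?thesis .
qed

text \<open>The coefficient at 0 only enters the expansion at the empty set, where
  the Kirkwood-Salsburg operator is the identity; it is chosen to make the expansion equal 1 there.\<close>

definition coeff_step ::
    "('x \<Rightarrow> complex) \<Rightarrow> ('x set \<Rightarrow> complex) \<Rightarrow> 'x set \<Rightarrow> (nat \<Rightarrow> complex) \<Rightarrow> nat \<Rightarrow> complex" where
  "coeff_step z W L a k =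
     (if k = 0 then 1 - (\<Sum>Y\<in>Pow L - {{}}. weight z W Y * a (card Y - 1)) else a (k - 1))"

lemma weight_expansion_coeff_step:
  assumes L: "finite L" and X: "finite X"
  shows "weight_expansion z W L (coeff_step z W L a) X
       = (if X = {} then 1 else weight_expansion z W L (\<lambda>k. a (k - 1)) X)"
proof (cases "X = {}")
  case True
  have "(\<Sum>Y\<in>Pow L - {{}}. weight z W Y * coeff_step z W L a (card Y))
      = (\<Sum>Y\<in>Pow L - {{}}. weight z W Y * a (card Y - 1))"
  proof (intro sum.cong refl)
    fix Y assume "Y \<in> Pow L - {{}}"
    then have "card Y \<noteq> 0"
      using L by (auto simp: card_eq_0_iff dest: finite_subset)
    then show "weight z W Y * coeff_step z W L a (card Y) = weight z W Y * a (card Y - 1)"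
      by (simp add: coeff_step_def)
  qed
  then show ?thesis
    using True L by (simp add: weight_expansion_def sum.remove[of "Pow L" "{}"] coeff_step_def)
next
  case False
  have "(\<Sum>N\<in>Pow (L - X). weight z W (X \<union> N) * coeff_step z W L a (card (X \<union> N)))
      = (\<Sum>N\<in>Pow (L - X). weight z W (X \<union> N) * a (card (X \<union> N) - 1))"
  proof (intro sum.cong refl)
    fix N assume "N \<in> Pow (L - X)"
    then have "finite N"
      using L by (auto intro: rev_finite_subset[of "L - X"])
    then have "card (X \<union> N) \<noteq> 0"
      using False X by (simp add: card_eq_0_iff)
    then show "weight z W (X \<union> N) * coeff_step z W L a (card (X \<union> N))
        = weight z W (X \<union> N) * a (card (X \<union> N) - 1)"
      by (simp add: coeff_step_def)
  qed
  with False show ?thesis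
    by (simp add: weight_expansion_def)
qed

definition rho_coeffs :: "('x \<Rightarrow> complex) \<Rightarrow> ('x set \<Rightarrow> complex) \<Rightarrow> 'x set \<Rightarrow> nat \<Rightarrow> nat \<Rightarrow> complex" where
  "rho_coeffs z W L n = (coeff_step z W L ^^ n) (\<lambda>k. if k = 0 then 1 else 0)"

lemma rho_coeffs_Suc: "rho_coeffs z W L (Suc n) = coeff_step z W L (rho_coeffs z W L n)"
  by (simp add: rho_coeffs_def)

lemma rho_seq_Suc: "rho_seq z W s L (Suc n) = KS z W s L (rho_seq z W s L n)"
  by (simp add: rho_seq_def)

lemma rho_seq_empty: "rho_seq z W s L n {} = 1"
  by (induction n) (simp_all add: rho_seq_def KS_def)

lemma rho_seq_eq_weight_expansion:
  assumes L: "finite L" and s: "selector s"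
  shows "finite X \<Longrightarrow> rho_seq z W s L n X = weight_expansion z W L (rho_coeffs z W L n) X"
proof (induction n arbitrary: X)
  case 0
  then show ?case
    using L by (simp add: rho_seq_def rho_coeffs_def weight_expansion_indicator)
next
  case (Suc n)
  show ?case
  proof (cases "X = {}")
    case True
    then show ?thesis
      using L by (simp add: rho_seq_empty rho_coeffs_Suc weight_expansion_coeff_step)
  next
    case False
    then show ?thesis
      using KS_weight_expansion[OF L s Suc.prems False Suc.IH] L Suc.prems
      by (simp add: rho_seq_Suc rho_coeffs_Suc weight_expansion_coeff_step)
  qed
qed

theorem lemma6p2:
  fixes z :: "'x::countable \<Rightarrow> complex" and W :: "'x set \<Rightarrow> complex"
    and \<Lambda> :: "'x set" and s t :: "'x set \<Rightarrow> 'x"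
  assumes "finite \<Lambda>" and "selector s" and "selector t"
  shows "(\<forall>n X. finite X \<longrightarrow> rho_seq z W s \<Lambda> n X = rho_seq z W t \<Lambda> n X)
         \<and> (\<forall>n. rho_seq z W s \<Lambda> n {} = 1)"
  using rho_seq_eq_weight_expansion[OF assms(1,2)] rho_seq_eq_weight_expansion[OF assms(1,3)]
  by (simp add: rho_seq_empty)

end
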